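(* Let $\mathcal{M}=(S,P,E,s_{init},L)$ be a CTMC with absorbing goal state $g$, let $\varepsilon,\delta\geq0$, $q=\max_{p\in S}E(p)$ and $t\geq0$. For all $s,s'\in S$ with $s\sim_{\varepsilon,\delta}s'$, $$\left|\mathrm{Pr}_s(\lozenge^{\leq t}g)-\mathrm{Pr}_{s'}(\lozenge^{\leq t}g)\right|\leq 1-e^{-q t(e^{\delta}(1+\varepsilon)-1)}.$$
   Context: A CTMC $(S,P,E,s_{init},L)$: finite $S$, $P\colon S\to\mathrm{Distr}(S)$ ($P(s,A)=\sum_{a\in A}P(s,a)$), $E\colon S\to\mathbb{R}_{>0}$, initial state, labeling $L$; residence time in $s$ is exponential with rate $E(s)$, then a jump to $s'$ with probability $P(s,s')$. $\mathrm{Pr}_s(\lozenge^{\leq t}g)$: probability that the CTMC started in $s$ reaches $g$ within time $t$. For $R\subseteq S\times S$, $R(A)=\{t'\mid\exists a\in A:(a,t')\in R\}$. A reflexive symmetric $R$ is an $(\varepsilon,\delta)$-bisimulation if for all $(s,s')\in R$: $L(s)=L(s')$, $|\ln E(s)-\ln E(s')|\leq\delta$, and $P(s,A)\leq P(s',R(A))+\varepsilon$ for all $A\subseteq S$; $s\sim_{\varepsilon,\delta}s'$ if some such relation contains $(s,s')$. Standing assumption: $g$ is the unique goal state, absorbing and uniquely labeled, and all states from which $g$ is unreachable are collapsed into one absorbing uniquely labeled fail state. *)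

theory Defs
  imports "HOL-Probability.Probability"
begin

text \<open>A CTMC over the finite state type 's: jump distribution P, exit rates E, labeling L.
  P(s,A) is measure_pmf.prob (P s) A.\<close>

definition ctmc :: "('s::finite \<Rightarrow> 's pmf) \<Rightarrow> ('s \<Rightarrow> real) \<Rightarrow> bool" where
  "ctmc P E \<longleftrightarrow> (\<forall>s. E s > 0)"

definition step_rel :: "('s \<Rightarrow> 's pmf) \<Rightarrow> ('s \<times> 's) set" where
  "step_rel P = {(s, s'). s' \<in> set_pmf (P s)}"

text \<open>Standing assumption: g is the unique goal state, absorbing and uniquely labeled,
  and all states from which g is unreachable are collapsed into one absorbing,
  uniquely labeled fail state.\<close>
definition standing_assumption ::
  "('s \<Rightarrow> 's pmf) \<Rightarrow> ('s \<Rightarrow> 'l) \<Rightarrow> 's \<Rightarrow> bool" where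
  "standing_assumption P L g \<longleftrightarrow>
     P g = return_pmf g \<and> (\<forall>s. L s = L g \<longrightarrow> s = g) \<and>
     (\<forall>f. (f, g) \<notin> (step_rel P)\<^sup>* \<longrightarrow>
          P f = return_pmf f \<and> (\<forall>s. L s = L f \<longrightarrow> s = f)
          \<and> (\<forall>f'. (f', g) \<notin> (step_rel P)\<^sup>* \<longrightarrow> f' = f))"

text \<open>Probability to reach g within time t using at most n jumps
  (first-jump decomposition: sojourn time x ~ Exp(E s), then jump according to P s).\<close>
fun reach_jumps ::
  "('s::finite \<Rightarrow> 's pmf) \<Rightarrow> ('s \<Rightarrow> real) \<Rightarrow> 's \<Rightarrow> nat \<Rightarrow> 's \<Rightarrow> real \<Rightarrow> real" where
  "reach_jumps P E g 0 s t = (if s = g then 1 else 0)"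
| "reach_jumps P E g (Suc n) s t =
     (if s = g then 1 else
        (LINT x|lborel. indicator {0..t} x * (E s * exp (- E s * x)) *
           (\<Sum>s'\<in>UNIV. pmf (P s) s' * reach_jumps P E g n s' (t - x))))"

text \<open>Pr_s(<>^{<=t} g): probability of reaching g within time t, the supremum over the
  number of jumps (the event is the increasing union of the events "within n jumps").\<close>
definition reach_prob ::
  "('s::finite \<Rightarrow> 's pmf) \<Rightarrow> ('s \<Rightarrow> real) \<Rightarrow> 's \<Rightarrow> 's \<Rightarrow> real \<Rightarrow> real" where
  "reach_prob P E g s t = (SUP n. reach_jumps P E g n s t)"

definition eps_delta_bisim ::
  "('s \<Rightarrow> 's pmf) \<Rightarrow> ('s \<Rightarrow> real) \<Rightarrow> ('s \<Rightarrow> 'l) \<Rightarrow> real \<Rightarrow> real \<Rightarrow> ('s \<times> 's) set \<Rightarrow> bool" where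
  "eps_delta_bisim P E L \<epsilon> \<delta> R \<longleftrightarrow> refl R \<and> sym R \<and>
     (\<forall>(s, s') \<in> R. L s = L s' \<and> \<bar>ln (E s) - ln (E s')\<bar> \<le> \<delta> \<and>
        (\<forall>A. measure_pmf.prob (P s) A \<le> measure_pmf.prob (P s') (R `` A) + \<epsilon>))"

definition eps_delta_bisimilar ::
  "('s \<Rightarrow> 's pmf) \<Rightarrow> ('s \<Rightarrow> real) \<Rightarrow> ('s \<Rightarrow> 'l) \<Rightarrow> real \<Rightarrow> real \<Rightarrow> 's \<Rightarrow> 's \<Rightarrow> bool" where
  "eps_delta_bisimilar P E L \<epsilon> \<delta> s s' \<longleftrightarrow> (\<exists>R. eps_delta_bisim P E L \<epsilon> \<delta> R \<and> (s, s') \<in> R)"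

end

theory Submission
  imports Defs
begin

text \<open>Let \<open>r\<^sub>n(s, t)\<close> be the probability of reaching \<open>g\<close> from \<open>s\<close> within time \<open>t\<close>
  using at most \<open>n\<close> jumps, and \<open>c = q (e\<^sup>\<delta> (1 + \<epsilon>) - 1)\<close>. By induction on \<open>n\<close>,
  \<open>r\<^sub>n(s, t) - r\<^sub>n(s', t) \<le> 1 - e\<^sup>-\<^sup>c\<^sup>t\<close> for all related \<open>s, s'\<close>. In the step,
  \<open>r\<^sub>n\<^sub>+\<^sub>1(s, \<cdot>)\<close> is the convolution of the exponential sojourn density of rate \<open>E s\<close>
  with the \<open>P s\<close>-mixture \<open>H\<^sub>s\<close> of the functions \<open>r\<^sub>n(u, \<cdot>)\<close>. A discrete layer-cake
  argument turns the \<open>\<epsilon>\<close>-closeness of \<open>P s\<close> and \<open>P s'\<close> along \<open>R\<close> together with the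
  induction hypothesis into \<open>H\<^sub>s(\<tau>) - H\<^sub>s\<^sub>'(\<tau>) \<le> 1 - (1 - \<epsilon>) e\<^sup>-\<^sup>c\<^sup>\<tau>\<close>. Comparing the
  two convolutions pointwise, the rate mismatch \<open>|ln E s - ln E s'| \<le> \<delta>\<close> is absorbed
  by \<open>c\<close>, and the resulting kernel integrates to exactly \<open>1 - e\<^sup>-\<^sup>c\<^sup>t\<close>.\<close>

definition exp_conv :: "real \<Rightarrow> (real \<Rightarrow> real) \<Rightarrow> real \<Rightarrow> real" where
  "exp_conv a h t = (LINT x|lborel. indicator {0..t} x * (a * exp (- a * x)) * h (t - x))"

text \<open>Monotonicity is needed only to make the integrands Borel measurable.\<close>
definition cdf_like :: "(real \<Rightarrow> real) \<Rightarrow> bool" where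
  "cdf_like h \<longleftrightarrow> mono h \<and> (\<forall>y. 0 \<le> h y \<and> h y \<le> 1)"

lemma sum_pmf_level_split:
  fixes p :: "'s::finite pmf" and f :: "'s \<Rightarrow> real"
  assumes "\<forall>u. f u < m \<longrightarrow> f u = 0"
  shows "(\<Sum>u\<in>UNIV. pmf p u * f u)
    = m * measure_pmf.prob p {u. m \<le> f u} + (\<Sum>u\<in>UNIV. pmf p u * max (f u - m) 0)"
proof -
  have "(\<Sum>u\<in>UNIV. pmf p u * f u)
      = (\<Sum>u\<in>UNIV. m * (pmf p u * indicator {u. m \<le> f u} u) + pmf p u * max (f u - m) 0)"
  proof (rule sum.cong)
    fix u
    show "pmf p u * f u = m * (pmf p u * indicator {u. m \<le> f u} u) + pmf p u * max (f u - m) 0"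
      using assms[rule_format, of u] by (auto simp: indicator_def max_def algebra_simps)
  qed simp
  also have "\<dots> = m * measure_pmf.prob p {u. m \<le> f u} + (\<Sum>u\<in>UNIV. pmf p u * max (f u - m) 0)"
    by (simp add: sum.distrib measure_measure_pmf_finite flip: sum_distrib_left)
  finally show ?thesis .
qed

lemma sum_pmf_level_split_le:
  fixes p :: "'s::finite pmf" and f :: "'s \<Rightarrow> real"
  assumes "\<forall>u. 0 \<le> f u" and "0 \<le> m"
  shows "m * measure_pmf.prob p {u. m \<le> f u} + (\<Sum>u\<in>UNIV. pmf p u * max (f u - m) 0)
    \<le> (\<Sum>u\<in>UNIV. pmf p u * f u)"
proof -
  have "m * measure_pmf.prob p {u. m \<le> f u} + (\<Sum>u\<in>UNIV. pmf p u * max (f u - m) 0)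
      = (\<Sum>u\<in>UNIV. m * (pmf p u * indicator {u. m \<le> f u} u) + pmf p u * max (f u - m) 0)"
    by (simp add: sum.distrib measure_measure_pmf_finite flip: sum_distrib_left)
  also have "\<dots> \<le> (\<Sum>u\<in>UNIV. pmf p u * f u)"
  proof (rule sum_mono)
    fix u
    show "m * (pmf p u * indicator {u. m \<le> f u} u) + pmf p u * max (f u - m) 0 \<le> pmf p u * f u"
      using assms by (auto simp: indicator_def max_def algebra_simps)
  qed
  finally show ?thesis .
qed

text \<open>Layer cake: removing the smallest positive level \<open>m\<close> of \<open>w\<close> costs at most
  \<open>m \<epsilon>\<close>, because \<open>R\<close> carries \<open>{w \<ge> m}\<close> into \<open>{v \<ge> m}\<close>.\<close>
lemma sum_pmf_le_of_rel_dominated: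
  fixes p p' :: "'s::finite pmf" and w v :: "'s \<Rightarrow> real"
  assumes coupling: "\<forall>A. measure_pmf.prob p A \<le> measure_pmf.prob p' (R `` A) + \<epsilon>"
    and "\<epsilon> \<ge> 0" and "\<forall>u. 0 \<le> w u \<and> w u \<le> M" and "\<forall>u. 0 \<le> v u"
    and "\<forall>u u'. (u, u') \<in> R \<longrightarrow> w u \<le> v u'"
  shows "(\<Sum>u\<in>UNIV. pmf p u * w u) \<le> (\<Sum>u\<in>UNIV. pmf p' u * v u) + \<epsilon> * M"
  using assms(3-5)
proof (induction "card {u. 0 < w u}" arbitrary: w v M rule: less_induct)
  case less
  show ?case
  proof (cases "{u. 0 < w u} = {}")
    case True
    then have "w = (\<lambda>_. 0)" using less.prems(1) by (auto simp: fun_eq_iff not_less intro: order.antisym)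
    moreover have "0 \<le> M" using less.prems(1) by (meson order.trans)
    moreover have "0 \<le> (\<Sum>u\<in>UNIV. pmf p' u * v u)" using less.prems(2) by (simp add: sum_nonneg)
    ultimately show ?thesis using \<open>\<epsilon> \<ge> 0\<close> by simp
  next
    case False
    define m where "m = Min (w ` {u. 0 < w u})"
    have "m \<in> w ` {u. 0 < w u}"
      unfolding m_def using False by (intro Min_in) auto
    then obtain u0 where "0 < w u0" "w u0 = m" by auto
    then have "0 < m" by simp
    have m_le: "m \<le> w u" if "0 < w u" for u using that by (simp add: m_def)
    have "m \<le> M"
      using less.prems(1) \<open>w u0 = m\<close> by metis
    define w1 where "w1 u = max (w u - m) 0" for u
    define v1 where "v1 u = max (v u - m) 0" for u
    have "m < w u" if "0 < w1 u" for u
      using that by (simp add: w1_def)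
    then have "{u. 0 < w1 u} \<subseteq> {u. 0 < w u} - {u0}"
      using \<open>0 < m\<close> \<open>w u0 = m\<close> by force
    then have "card {u. 0 < w1 u} \<le> card ({u. 0 < w u} - {u0})"
      by (intro card_mono) auto
    also have "\<dots> < card {u. 0 < w u}"
      using \<open>0 < w u0\<close> by (intro card_Diff1_less) auto
    finally have card_less: "card {u. 0 < w1 u} < card {u. 0 < w u}" .
    have w1_bounds: "\<forall>u. 0 \<le> w1 u \<and> w1 u \<le> M - m"
      using less.prems(1) \<open>m \<le> M\<close> by (auto simp: w1_def)
    have w1_v1: "w1 u \<le> v1 u'" if "(u, u') \<in> R" for u u'
      using less.prems(3) that unfolding w1_def v1_def by (intro max.mono) auto
    have IH: "(\<Sum>u\<in>UNIV. pmf p u * w1 u) \<le> (\<Sum>u\<in>UNIV. pmf p' u * v1 u) + \<epsilon> * (M - m)"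
      using w1_v1 by (intro less.hyps[OF card_less w1_bounds]) (auto simp: v1_def)
    have "\<forall>u. w u < m \<longrightarrow> w u = 0"
      using m_le less.prems(1) by (meson less_eq_real_def not_le)
    then have split_w: "(\<Sum>u\<in>UNIV. pmf p u * w u)
        = m * measure_pmf.prob p {u. m \<le> w u} + (\<Sum>u\<in>UNIV. pmf p u * w1 u)"
      unfolding w1_def by (rule sum_pmf_level_split)
    have split_v: "m * measure_pmf.prob p' {u. m \<le> v u} + (\<Sum>u\<in>UNIV. pmf p' u * v1 u)
        \<le> (\<Sum>u\<in>UNIV. pmf p' u * v u)"
      unfolding v1_def using less.prems(2) \<open>0 < m\<close>
      by (intro sum_pmf_level_split_le) auto
    have "R `` {u. m \<le> w u} \<subseteq> {u. m \<le> v u}"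
      using less.prems(3) by (auto intro: order.trans)
    then have "measure_pmf.prob p' (R `` {u. m \<le> w u}) \<le> measure_pmf.prob p' {u. m \<le> v u}"
      by (simp add: measure_pmf.finite_measure_mono)
    then have "measure_pmf.prob p {u. m \<le> w u} \<le> measure_pmf.prob p' {u. m \<le> v u} + \<epsilon>"
      using coupling by (meson add_right_mono order.trans)
    then have "m * measure_pmf.prob p {u. m \<le> w u} \<le> m * (measure_pmf.prob p' {u. m \<le> v u} + \<epsilon>)"
      using \<open>0 < m\<close> by simp
    then show ?thesis using split_w split_v IH by (simp add: algebra_simps)
  qed
qed

lemma sum_pmf_le_of_rel_shift:
  fixes p p' :: "'s::finite pmf" and v :: "'s \<Rightarrow> real"
  assumes coupling: "\<forall>A. measure_pmf.prob p A \<le> measure_pmf.prob p' (R `` A) + \<epsilon>"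
    and "\<epsilon> \<ge> 0" and "\<forall>u. 0 \<le> v u \<and> v u \<le> 1" and "0 \<le> \<eta>" "\<eta> \<le> 1"
    and "\<forall>u u'. (u, u') \<in> R \<longrightarrow> v u - \<eta> \<le> v u'"
  shows "(\<Sum>u\<in>UNIV. pmf p u * v u) \<le> (\<Sum>u\<in>UNIV. pmf p' u * v u) + (1 - (1 - \<epsilon>) * (1 - \<eta>))"
proof -
  define w where "w u = max (v u - \<eta>) 0" for u
  have "(\<Sum>u\<in>UNIV. pmf p u * w u) \<le> (\<Sum>u\<in>UNIV. pmf p' u * v u) + \<epsilon> * (1 - \<eta>)"
    using assms by (intro sum_pmf_le_of_rel_dominated[OF coupling]) (auto simp: w_def)
  moreover have "(\<Sum>u\<in>UNIV. pmf p u * v u) \<le> (\<Sum>u\<in>UNIV. pmf p u * (\<eta> + w u))"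
    by (intro sum_mono mult_left_mono) (auto simp: w_def)
  moreover have "(\<Sum>u\<in>UNIV. pmf p u * (\<eta> + w u)) = \<eta> + (\<Sum>u\<in>UNIV. pmf p u * w u)"
    by (simp add: distrib_left sum.distrib flip: sum_distrib_right) (simp add: sum_pmf_eq_1)
  ultimately show ?thesis by (simp add: algebra_simps)
qed

lemma cdf_like_pmf_mixture:
  fixes p :: "'s::finite pmf"
  assumes "\<And>u. cdf_like (f u)"
  shows "cdf_like (\<lambda>\<tau>. \<Sum>u\<in>UNIV. pmf p u * f u \<tau>)"
  unfolding cdf_like_def
proof (intro conjI allI monoI)
  fix x y :: real assume "x \<le> y"
  then show "(\<Sum>u\<in>UNIV. pmf p u * f u x) \<le> (\<Sum>u\<in>UNIV. pmf p u * f u y)"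
    using assms by (intro sum_mono mult_left_mono) (auto simp: cdf_like_def dest: monoD)
next
  fix y
  show "0 \<le> (\<Sum>u\<in>UNIV. pmf p u * f u y)"
    using assms by (intro sum_nonneg) (simp add: cdf_like_def)
  have "(\<Sum>u\<in>UNIV. pmf p u * f u y) \<le> (\<Sum>u\<in>UNIV. pmf p u * 1)"
    using assms by (intro sum_mono mult_left_mono) (auto simp: cdf_like_def)
  then show "(\<Sum>u\<in>UNIV. pmf p u * f u y) \<le> 1" by (simp add: sum_pmf_eq_1)
qed

lemma integrable_exp_conv:
  fixes h :: "real \<Rightarrow> real"
  assumes "h \<in> borel_measurable borel" and "\<And>y. \<bar>h y\<bar> \<le> 1" and "0 \<le> a"
  shows "integrable lborel (\<lambda>x. indicator {0..t} x * (a * exp (- a * x)) * h (t - x))"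
proof (rule Bochner_Integration.integrable_bound)
  show "integrable lborel (\<lambda>x. a * indicator {0..t} x :: real)"
    using borel_integrable_atLeastAtMost[of 0 t "\<lambda>_. a"] by simp
  show "(\<lambda>x. indicator {0..t} x * (a * exp (- a * x)) * h (t - x)) \<in> borel_measurable lborel"
    using assms(1) by measurable
  have "\<bar>a * exp (- a * x) * h (t - x)\<bar> \<le> a * 1 * 1" if "0 \<le> x" for x
    using assms that unfolding abs_mult by (intro mult_mono) auto
  then show "AE x in lborel. norm (indicator {0..t} x * (a * exp (- a * x)) * h (t - x))
      \<le> norm (a * indicator {0..t} x :: real)"
    using assms(3) by (intro AE_I2) (simp add: indicator_def abs_mult)
qed

text \<open>The first summand is what the bound \<open>1 - (1 - \<epsilon>) e\<^sup>-\<^sup>c\<^sup>\<tau>\<close> turns into under the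
  density of the faster rate \<open>b\<close>; it integrates to exactly \<open>1 - e\<^sup>-\<^sup>c\<^sup>t\<close>.\<close>
lemma integral_comparison_kernel:
  fixes a b c k t :: real
  assumes "0 \<le> t"
  shows "(LINT x|lborel. indicator {0..t} x *
      ((b - (b - c) * exp (- c * (t - x))) * exp (- b * x) + k * (a * exp (- a * x) - b * exp (- b * x))))
    = 1 - exp (- c * t) + k * (exp (- b * t) - exp (- a * t))"
proof -
  define T where "T x = (b - (b - c) * exp (- c * (t - x))) * exp (- b * x)
    + k * (a * exp (- a * x) - b * exp (- b * x))" for x
  define \<Phi> where "\<Phi> x = exp (- c * (t - x)) * exp (- b * x) - exp (- b * x)
    + k * (exp (- b * x) - exp (- a * x))" for x
  have "(LINT x|lborel. indicator {0..t} x *\<^sub>R T x) = \<Phi> t - \<Phi> 0"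
  proof (rule integral_FTC_atLeastAtMost[OF assms])
    show "continuous_on {0..t} T" unfolding T_def by (intro continuous_intros)
    fix x
    have "(\<Phi> has_real_derivative T x) (at x within {0..t})"
      unfolding \<Phi>_def T_def
      by (rule derivative_eq_intros refl | simp)+ (simp add: algebra_simps)
    then show "(\<Phi> has_vector_derivative T x) (at x within {0..t})"
      by (simp add: has_real_derivative_iff_has_vector_derivative)
  qed
  also have "\<Phi> t - \<Phi> 0 = 1 - exp (- c * t) + k * (exp (- b * t) - exp (- a * t))"
    unfolding \<Phi>_def by (simp add: algebra_simps)
  finally show ?thesis unfolding T_def by simp
qed

lemma integral_exp_density:
  fixes a t :: real
  assumes "0 \<le> t"
  shows "(LINT x|lborel. indicator {0..t} x * (a * exp (- a * x))) = 1 - exp (- a * t)"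
  using integral_comparison_kernel[OF assms, where a = a and b = a and c = a and k = 0] by simp

lemma cdf_like_exp_conv:
  assumes h: "cdf_like h" and "0 < a"
  shows "cdf_like (exp_conv a h)"
proof -
  have h_meas: "h \<in> borel_measurable borel"
    using h by (simp add: cdf_like_def borel_measurable_mono)
  have h_bounds: "0 \<le> h y" "h y \<le> 1" "\<bar>h y\<bar> \<le> 1" for y
    using h by (auto simp: cdf_like_def)
  note integrable = integrable_exp_conv[OF h_meas h_bounds(3)] integrable_exp_conv[of "\<lambda>_. 1"]
  have "exp_conv a h t \<le> 1" for t
  proof (cases "0 \<le> t")
    case True
    have "exp_conv a h t \<le> (LINT x|lborel. indicator {0..t} x * (a * exp (- a * x)) * 1)"
      unfolding exp_conv_def using \<open>0 < a\<close> h_bounds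
      by (intro integral_mono integrable) (auto simp: indicator_def intro!: mult_left_mono)
    also have "\<dots> = 1 - exp (- a * t)" using integral_exp_density[OF True] by simp
    finally show ?thesis by (smt (verit) exp_gt_zero)
  qed (simp add: exp_conv_def indicator_def)
  moreover have "0 \<le> exp_conv a h t" for t
    unfolding exp_conv_def using \<open>0 < a\<close> h_bounds by (intro Bochner_Integration.integral_nonneg) simp
  moreover have "mono (exp_conv a h)"
  proof (rule monoI)
    fix t t' :: real assume "t \<le> t'"
    then have "h (t - x) \<le> h (t' - x)" for x
      using h by (simp add: cdf_like_def monoD)
    then have "indicator {0..t} x * (a * exp (- a * x)) * h (t - x)
        \<le> indicator {0..t'} x * (a * exp (- a * x)) * h (t' - x)" for x
      using \<open>t \<le> t'\<close> \<open>0 < a\<close> h_bounds by (auto simp: indicator_def)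
    then show "exp_conv a h t \<le> exp_conv a h t'"
      unfolding exp_conv_def using \<open>0 < a\<close> by (intro integral_mono integrable) auto
  qed
  ultimately show ?thesis by (simp add: cdf_like_def)
qed

lemma weighted_diff_le_of_rate_le:
  fixes a b c \<epsilon> H H' ea eb ec :: real
  assumes "0 < a" "a \<le> b" "0 \<le> eb" "eb \<le> ea" "0 \<le> ec"
    and "0 \<le> H" "H \<le> 1" "0 \<le> H'" "H - H' \<le> 1 - (1 - \<epsilon>) * ec"
    and "b - c \<le> a * (1 - \<epsilon>)"
  shows "a * ea * H - b * eb * H' \<le> (b - (b - c) * ec) * eb + (a * ea - b * eb)"
proof -
  have "a * ea * H - b * eb * H' = a * eb * (H - H') + a * (ea - eb) * H + (a - b) * eb * H'"
    by (simp add: algebra_simps)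
  also have "\<dots> \<le> a * eb * (1 - (1 - \<epsilon>) * ec) + a * (ea - eb) + 0"
  proof (intro add_mono)
    show "a * eb * (H - H') \<le> a * eb * (1 - (1 - \<epsilon>) * ec)"
      using assms by (intro mult_left_mono) auto
    show "a * (ea - eb) * H \<le> a * (ea - eb)"
      using assms by (simp add: mult_left_le)
    show "(a - b) * eb * H' \<le> 0"
      using assms by (simp add: mult_nonpos_nonneg)
  qed
  also have "\<dots> \<le> (b - (b - c) * ec) * eb + (a * ea - b * eb)"
    using mult_right_mono[OF \<open>b - c \<le> a * (1 - \<epsilon>)\<close>, of "eb * ec"] assms
    by (simp add: algebra_simps)
  finally show ?thesis .
qed

lemma weighted_diff_le_of_rate_ge:
  fixes a b c \<epsilon> H H' ea eb ec :: real
  assumes "0 < b" "b \<le> a" "0 \<le> ea" "ea \<le> eb" "0 \<le> ec"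
    and "H \<le> 1" "0 \<le> H'" "H - H' \<le> 1 - (1 - \<epsilon>) * ec"
    and "a - c \<le> b * (1 - \<epsilon>)"
  shows "a * ea * H - b * eb * H' \<le> (a - (a - c) * ec) * ea"
proof -
  have "a * ea * H - b * eb * H' = b * ea * (H - H') + (a - b) * ea * H - b * (eb - ea) * H'"
    by (simp add: algebra_simps)
  also have "\<dots> \<le> b * ea * (1 - (1 - \<epsilon>) * ec) + (a - b) * ea - 0"
  proof (intro add_mono diff_mono)
    show "b * ea * (H - H') \<le> b * ea * (1 - (1 - \<epsilon>) * ec)"
      using assms by (intro mult_left_mono) auto
    show "(a - b) * ea * H \<le> (a - b) * ea"
      using assms by (simp add: mult_left_le)
    show "0 \<le> b * (eb - ea) * H'"
      using assms by simp
  qed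
  also have "\<dots> \<le> (a - (a - c) * ec) * ea"
    using mult_right_mono[OF \<open>a - c \<le> b * (1 - \<epsilon>)\<close>, of "ea * ec"] assms
    by (simp add: algebra_simps)
  finally show ?thesis .
qed

lemma exp_conv_diff_le:
  fixes h h' :: "real \<Rightarrow> real" and a b c \<epsilon> t :: real
  assumes h: "cdf_like h" and h': "cdf_like h'" and "0 < a" "0 < b" "0 \<le> t"
    and gap: "\<And>\<tau>. 0 \<le> \<tau> \<Longrightarrow> \<tau> \<le> t \<Longrightarrow> h \<tau> - h' \<tau> \<le> 1 - (1 - \<epsilon>) * exp (- c * \<tau>)"
    and rate_le: "a \<le> b \<Longrightarrow> b - c \<le> a * (1 - \<epsilon>)"
    and rate_ge: "b \<le> a \<Longrightarrow> a - c \<le> b * (1 - \<epsilon>)"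
  shows "exp_conv a h t - exp_conv b h' t \<le> 1 - exp (- c * t)"
proof -
  have bounds: "0 \<le> h y" "h y \<le> 1" "\<bar>h y\<bar> \<le> 1" "0 \<le> h' y" "h' y \<le> 1" "\<bar>h' y\<bar> \<le> 1" for y
    using h h' by (auto simp: cdf_like_def)
  have "h \<in> borel_measurable borel" "h' \<in> borel_measurable borel"
    using h h' by (simp_all add: cdf_like_def borel_measurable_mono)
  note integrable = integrable_exp_conv[OF this(1) bounds(3)] integrable_exp_conv[OF this(2) bounds(6)]
  have integrable_cont: "integrable lborel (\<lambda>x. indicator {0..t} x * F x)"
    if "continuous_on {0..t} F" for F :: "real \<Rightarrow> real"
    using borel_integrable_atLeastAtMost'[OF that] by (simp add: set_integrable_def)
  define D where "D x = a * exp (- a * x) * h (t - x) - b * exp (- b * x) * h' (t - x)" for x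
  have "exp_conv a h t - exp_conv b h' t
      = (LINT x|lborel. indicator {0..t} x * (a * exp (- a * x)) * h (t - x)
          - indicator {0..t} x * (b * exp (- b * x)) * h' (t - x))"
    unfolding exp_conv_def using integrable \<open>0 < a\<close> \<open>0 < b\<close> by simp
  also have "\<dots> = (LINT x|lborel. indicator {0..t} x * D x)"
    by (simp add: D_def algebra_simps)
  finally have diff: "exp_conv a h t - exp_conv b h' t = (LINT x|lborel. indicator {0..t} x * D x)" .
  have D_integrable: "integrable lborel (\<lambda>x. indicator {0..t} x * D x)"
    using integrable \<open>0 < a\<close> \<open>0 < b\<close> by (simp add: D_def right_diff_distrib mult.assoc)
  have D_gap: "h (t - x) - h' (t - x) \<le> 1 - (1 - \<epsilon>) * exp (- c * (t - x))" if "x \<in> {0..t}" for x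
    using gap that by simp
  show ?thesis
  proof (cases "a \<le> b")
    case True
    define B where "B x = (b - (b - c) * exp (- c * (t - x))) * exp (- b * x)
      + (a * exp (- a * x) - b * exp (- b * x))" for x
    have "D x \<le> B x" if "x \<in> {0..t}" for x
      unfolding D_def B_def using True that \<open>0 < a\<close> bounds D_gap[OF that] rate_le
      by (intro weighted_diff_le_of_rate_le) (auto simp: mult_right_mono)
    then have "(LINT x|lborel. indicator {0..t} x * D x) \<le> (LINT x|lborel. indicator {0..t} x * B x)"
      unfolding B_def
      by (intro integral_mono D_integrable integrable_cont continuous_intros) (auto simp: indicator_def B_def)
    also have "\<dots> = 1 - exp (- c * t) + (exp (- b * t) - exp (- a * t))"
      using integral_comparison_kernel[OF \<open>0 \<le> t\<close>, where k = 1] by (simp add: B_def)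
    also have "\<dots> \<le> 1 - exp (- c * t)"
      using True \<open>0 \<le> t\<close> by (simp add: mult_right_mono)
    finally show ?thesis using diff by simp
  next
    case False
    define B where "B x = (a - (a - c) * exp (- c * (t - x))) * exp (- a * x)" for x
    have "D x \<le> B x" if "x \<in> {0..t}" for x
      unfolding D_def B_def using False that \<open>0 < b\<close> bounds D_gap[OF that] rate_ge
      by (intro weighted_diff_le_of_rate_ge) (auto simp: mult_right_mono)
    then have "(LINT x|lborel. indicator {0..t} x * D x) \<le> (LINT x|lborel. indicator {0..t} x * B x)"
      unfolding B_def
      by (intro integral_mono D_integrable integrable_cont continuous_intros) (auto simp: indicator_def B_def)
    also have "\<dots> = 1 - exp (- c * t)"
      using integral_comparison_kernel[OF \<open>0 \<le> t\<close>, where b = a and k = 0] by (simp add: B_def)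
    finally show ?thesis using diff by simp
  qed
qed

lemma reach_jumps_Suc_exp_conv:
  assumes "s \<noteq> g"
  shows "reach_jumps P E g (Suc n) s
    = exp_conv (E s) (\<lambda>\<tau>. \<Sum>u\<in>UNIV. pmf (P s) u * reach_jumps P E g n u \<tau>)"
  using assms by (simp add: exp_conv_def fun_eq_iff)

lemma cdf_like_reach_jumps:
  assumes "ctmc P E"
  shows "cdf_like (reach_jumps P E g n s)"
proof (induction n arbitrary: s)
  case 0
  show ?case by (simp add: cdf_like_def mono_def)
next
  case (Suc n)
  show ?case
  proof (cases "s = g")
    case True
    then show ?thesis by (simp add: cdf_like_def mono_def)
  next
    case False
    have "cdf_like (exp_conv (E s) (\<lambda>\<tau>. \<Sum>u\<in>UNIV. pmf (P s) u * reach_jumps P E g n u \<tau>))"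
      using Suc.IH assms by (intro cdf_like_exp_conv cdf_like_pmf_mixture) (auto simp: ctmc_def)
    with False show ?thesis by (simp add: reach_jumps_Suc_exp_conv)
  qed
qed

lemma rate_gap_le:
  fixes a b q \<epsilon> \<delta> :: real
  assumes "0 < a" "a \<le> b" "b \<le> q" "\<bar>ln a - ln b\<bar> \<le> \<delta>" "0 \<le> \<epsilon>" "0 \<le> \<delta>"
  shows "b - q * (exp \<delta> * (1 + \<epsilon>) - 1) \<le> a * (1 - \<epsilon>)"
proof -
  have "exp (ln b - \<delta>) \<le> exp (ln a)"
    using assms(4) by (simp add: abs_le_iff)
  then have b_le: "b * exp (- \<delta>) \<le> a"
    using assms(1,2) by (simp add: exp_diff exp_minus divide_inverse)
  have "1 - exp (- \<delta>) \<le> exp \<delta> - 1"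
    using exp_ge_add_one_self[of \<delta>] exp_ge_add_one_self[of "- \<delta>"] by linarith
  moreover have "\<epsilon> \<le> exp \<delta> * \<epsilon>"
    using assms mult_right_mono[of 1 "exp \<delta>" \<epsilon>] by simp
  ultimately have "1 - exp (- \<delta>) + \<epsilon> \<le> exp \<delta> * (1 + \<epsilon>) - 1"
    by (simp add: algebra_simps)
  moreover have "0 \<le> 1 - exp (- \<delta>) + \<epsilon>"
    using assms by simp
  ultimately have "b * (1 - exp (- \<delta>) + \<epsilon>) \<le> q * (exp \<delta> * (1 + \<epsilon>) - 1)"
    using assms by (intro mult_mono) auto
  moreover have "a * \<epsilon> \<le> b * \<epsilon>"
    using assms by (simp add: mult_right_mono)
  ultimately show ?thesis
    using b_le by (simp add: algebra_simps)
qed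

lemma eps_delta_bisim_goal_iff:
  assumes "eps_delta_bisim P E L \<epsilon> \<delta> R" and "\<forall>s. L s = L g \<longrightarrow> s = g" and "(u, u') \<in> R"
  shows "u = g \<longleftrightarrow> u' = g"
proof -
  have "L u = L u'" using assms(1,3) unfolding eps_delta_bisim_def by blast
  then show ?thesis using assms(2) by metis
qed

lemma eps_delta_bisim_rate_gap:
  assumes "ctmc P E" and "eps_delta_bisim P E L \<epsilon> \<delta> R" and "0 \<le> \<epsilon>" "0 \<le> \<delta>"
    and "\<forall>s. E s \<le> q" and "(u, u') \<in> R" and "E u \<le> E u'"
  shows "E u' - q * (exp \<delta> * (1 + \<epsilon>) - 1) \<le> E u * (1 - \<epsilon>)"
proof (rule rate_gap_le)
  show "0 < E u" using \<open>ctmc P E\<close> by (simp add: ctmc_def)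
  show "\<bar>ln (E u) - ln (E u')\<bar> \<le> \<delta>"
    using assms(2,6) unfolding eps_delta_bisim_def by blast
qed (use assms in auto)

lemma reach_jumps_diff_le_of_bisim:
  fixes P :: "'s::finite \<Rightarrow> 's pmf" and E :: "'s \<Rightarrow> real" and L :: "'s \<Rightarrow> 'l"
  assumes "ctmc P E" and g_label: "\<forall>s. L s = L g \<longrightarrow> s = g"
    and R: "eps_delta_bisim P E L \<epsilon> \<delta> R" and "0 \<le> \<epsilon>" "0 \<le> \<delta>" and q: "\<forall>s. E s \<le> q"
    and "(s, s') \<in> R" and "0 \<le> t"
  shows "reach_jumps P E g n s t - reach_jumps P E g n s' t
    \<le> 1 - exp (- (q * (exp \<delta> * (1 + \<epsilon>) - 1)) * t)"
proof -
  define c where "c = q * (exp \<delta> * (1 + \<epsilon>) - 1)"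
  have "1 * 1 \<le> exp \<delta> * (1 + \<epsilon>)"
    using assms by (intro mult_mono) auto
  moreover have "0 \<le> q"
    using q \<open>ctmc P E\<close> by (meson ctmc_def less_le_trans less_imp_le)
  ultimately have "0 \<le> c" by (simp add: c_def)
  note goal_iff = eps_delta_bisim_goal_iff[OF R g_label]
  note rate_gap = eps_delta_bisim_rate_gap[OF \<open>ctmc P E\<close> R \<open>0 \<le> \<epsilon>\<close> \<open>0 \<le> \<delta>\<close> q, folded c_def]
  note cdf_like_rj = cdf_like_reach_jumps[OF \<open>ctmc P E\<close>]
  have "reach_jumps P E g n s t - reach_jumps P E g n s' t \<le> 1 - exp (- c * t)"
    using \<open>(s, s') \<in> R\<close> \<open>0 \<le> t\<close>
  proof (induction n arbitrary: s s' t)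
    case 0
    then show ?case using goal_iff \<open>0 \<le> c\<close> by simp
  next
    case (Suc n)
    show ?case
    proof (cases "s = g")
      case True
      then show ?thesis using Suc.prems goal_iff \<open>0 \<le> c\<close> by simp
    next
      case False
      then have "s' \<noteq> g" using Suc.prems goal_iff by blast
      have "(s', s) \<in> R" using R Suc.prems(1) by (auto simp: eps_delta_bisim_def dest: symD)
      define H where "H u = (\<lambda>\<tau>. \<Sum>v\<in>UNIV. pmf (P u) v * reach_jumps P E g n v \<tau>)" for u
      have "H s \<tau> \<le> H s' \<tau> + (1 - (1 - \<epsilon>) * (1 - (1 - exp (- c * \<tau>))))" if "0 \<le> \<tau>" for \<tau>
        unfolding H_def
      proof (rule sum_pmf_le_of_rel_shift)
        show "\<forall>A. measure_pmf.prob (P s) A \<le> measure_pmf.prob (P s') (R `` A) + \<epsilon>"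
          using R Suc.prems(1) unfolding eps_delta_bisim_def by blast
        show "\<forall>v. 0 \<le> reach_jumps P E g n v \<tau> \<and> reach_jumps P E g n v \<tau> \<le> 1"
          using cdf_like_rj by (simp add: cdf_like_def)
        show "0 \<le> 1 - exp (- c * \<tau>)"
          using \<open>0 \<le> c\<close> that by (simp add: mult_nonneg_nonneg)
        show "\<forall>v v'. (v, v') \<in> R \<longrightarrow> reach_jumps P E g n v \<tau> - (1 - exp (- c * \<tau>)) \<le> reach_jumps P E g n v' \<tau>"
          using Suc.IH that by fastforce
      qed (use \<open>0 \<le> \<epsilon>\<close> in simp_all)
      then have gap: "H s \<tau> - H s' \<tau> \<le> 1 - (1 - \<epsilon>) * exp (- c * \<tau>)"
        if "0 \<le> \<tau>" "\<tau> \<le> t" for \<tau>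
        using that by fastforce
      have H_cdf: "cdf_like (H u)" for u
        unfolding H_def by (rule cdf_like_pmf_mixture) (rule cdf_like_rj)
      have "0 < E u" for u using \<open>ctmc P E\<close> by (simp add: ctmc_def)
      then have "exp_conv (E s) (H s) t - exp_conv (E s') (H s') t \<le> 1 - exp (- c * t)"
        using rate_gap[OF Suc.prems(1)] rate_gap[OF \<open>(s', s) \<in> R\<close>]
        by (intro exp_conv_diff_le[OF H_cdf H_cdf _ _ Suc.prems(2) gap]) auto
      then show ?thesis
        using False \<open>s' \<noteq> g\<close> by (simp add: reach_jumps_Suc_exp_conv H_def)
    qed
  qed
  then show ?thesis by (simp add: c_def)
qed

lemma cSUP_le_cSUP_add:
  fixes f g :: "'a \<Rightarrow> real"
  assumes "bdd_above (range g)" and "\<And>n. f n \<le> g n + K"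
  shows "(SUP n. f n) \<le> (SUP n. g n) + K"
proof (rule cSUP_least)
  fix n
  have "g n \<le> (SUP n. g n)" using assms(1) by (rule cSUP_upper[OF UNIV_I])
  then show "f n \<le> (SUP n. g n) + K" using assms(2)[of n] by simp
qed simp

theorem proposition3:
  fixes P :: "'s::finite \<Rightarrow> 's pmf" and E :: "'s \<Rightarrow> real" and L :: "'s \<Rightarrow> 'l"
    and s_init g :: 's and \<epsilon> \<delta> t :: real
  assumes "ctmc P E"
    and "standing_assumption P L g"
    and "\<epsilon> \<ge> 0" and "\<delta> \<ge> 0" and "t \<ge> 0"
  shows "\<forall>s s'. eps_delta_bisimilar P E L \<epsilon> \<delta> s s' \<longrightarrow>
           \<bar>reach_prob P E g s t - reach_prob P E g s' t\<bar>
             \<le> 1 - exp (- (Max (range E)) * t * (exp \<delta> * (1 + \<epsilon>) - 1))"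
proof (intro allI impI)
  fix s s' assume "eps_delta_bisimilar P E L \<epsilon> \<delta> s s'"
  then obtain R where R: "eps_delta_bisim P E L \<epsilon> \<delta> R" and "(s, s') \<in> R"
    unfolding eps_delta_bisimilar_def by blast
  then have "(s', s) \<in> R" by (auto simp: eps_delta_bisim_def dest: symD)
  have g_label: "\<forall>u. L u = L g \<longrightarrow> u = g"
    using assms(2) by (simp add: standing_assumption_def)
  define K where "K = 1 - exp (- (Max (range E) * (exp \<delta> * (1 + \<epsilon>) - 1)) * t)"
  have E_le_Max: "\<forall>u. E u \<le> Max (range E)" by simp
  have "reach_jumps P E g n u t \<le> reach_jumps P E g n u' t + K" if "(u, u') \<in> R" for n u u'
    using reach_jumps_diff_le_of_bisim[OF assms(1) g_label R assms(3,4) E_le_Max that assms(5), of n]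
    unfolding K_def by linarith
  moreover have "bdd_above (range (\<lambda>n. reach_jumps P E g n u t))" for u
    using cdf_like_reach_jumps[OF assms(1)] by (intro bdd_aboveI[where M = 1]) (auto simp: cdf_like_def)
  ultimately have "reach_prob P E g s t \<le> reach_prob P E g s' t + K"
    and "reach_prob P E g s' t \<le> reach_prob P E g s t + K"
    using \<open>(s, s') \<in> R\<close> \<open>(s', s) \<in> R\<close> unfolding reach_prob_def by (auto intro: cSUP_le_cSUP_add)
  moreover have "K = 1 - exp (- (Max (range E)) * t * (exp \<delta> * (1 + \<epsilon>) - 1))"
    by (simp only: K_def mult_minus_left mult_ac)
  ultimately show "\<bar>reach_prob P E g s t - reach_prob P E g s' t\<bar>
      \<le> 1 - exp (- (Max (range E)) * t * (exp \<delta> * (1 + \<epsilon>) - 1))"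
    by linarith
qed

end
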